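(* Let $n, r$ be positive integers and let $G$ be a graph all of whose vertices have degree at least $r$. Then $$m_e(G\square K_n, r)\leqslant\sum_{t=0}^{n-1} m_e(G, r-t),$$ where $m_e(G, i)$ is defined to be $0$ if $i\leqslant0$.
   Context: All graphs are finite, simple and undirected; $K_n$ is the complete graph on $n$ vertices. The Cartesian product $G\square H$ has vertex set $V(G)\times V(H)$, with $(g_1,h_1)$ adjacent to $(g_2,h_2)$ iff either $g_1=g_2$ and $h_1h_2\in E(H)$, or $h_1=h_2$ and $g_1g_2\in E(G)$. Given graphs $G$ and $H$, the $H$-bootstrap percolation process on $G$ starts with a set $E_0\subseteq E(G)$ of initially activated edges, and for $i\geqslant1$, $E_i$ consists of $E_{i-1}$ together with all edges $e\in E(G)$ for which there is a subgraph $H_e$ of $G$ isomorphic to $H$ with $e\in E(H_e)$ and $E(H_e)\setminus\{e\}\subseteq E_{i-1}$. $E_0$ is a percolating set if $\bigcup_{i\geqslant0}E_i=E(G)$; $\mathrm{wsat}(G,H)$ is the minimum size of a percolating set. $m_e(G,r)=\mathrm{wsat}(G,S_{r+1})$, where $S_{r+1}$ is the star on $r+2$ vertices. *)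

theory Defs
  imports Main
begin

type_synonym 'a graph = "'a set \<times> 'a set set"

definition verts :: "'a graph \<Rightarrow> 'a set" where "verts G = fst G"
definition edges :: "'a graph \<Rightarrow> 'a set set" where "edges G = snd G"

definition is_graph :: "'a graph \<Rightarrow> bool" where
  "is_graph G \<longleftrightarrow> finite (verts G) \<and>
     edges G \<subseteq> {{x, y} | x y. x \<in> verts G \<and> y \<in> verts G \<and> x \<noteq> y}"

definition degree :: "'a graph \<Rightarrow> 'a \<Rightarrow> nat" where
  "degree G v = card {e \<in> edges G. v \<in> e}"

definition complete_graph :: "nat \<Rightarrow> nat graph" where
  "complete_graph n = ({0..<n}, {{i, j} | i j. i < n \<and> j < n \<and> i \<noteq> j})"

definition cart_prod :: "'a graph \<Rightarrow> 'b graph \<Rightarrow> ('a \<times> 'b) graph" where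
  "cart_prod G H = (verts G \<times> verts H,
     {{(g, h1), (g, h2)} | g h1 h2. g \<in> verts G \<and> {h1, h2} \<in> edges H} \<union>
     {{(g1, h), (g2, h)} | g1 g2 h. h \<in> verts H \<and> {g1, g2} \<in> edges G})"

text \<open>Star S_{r+1}: centre 0 and leaves 1..r+1 (r+2 vertices).\<close>
definition star :: "nat \<Rightarrow> nat graph" where
  "star r = ({0..Suc r}, {{0, i} | i. 1 \<le> i \<and> i \<le> Suc r})"

text \<open>Edge sets of subgraphs of G isomorphic to H (given by an injective vertex map
  sending edges to edges; the subgraph's edge set is the image of E(H)).\<close>
definition copies :: "'a graph \<Rightarrow> 'b graph \<Rightarrow> 'a set set set" where
  "copies G H = {(\<lambda>h. f ` h) ` edges H | f. inj_on f (verts H) \<and> f ` verts H \<subseteq> verts G \<and>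
                   (\<forall>h \<in> edges H. f ` h \<in> edges G)}"

definition boot_step :: "'a graph \<Rightarrow> 'b graph \<Rightarrow> 'a set set \<Rightarrow> 'a set set" where
  "boot_step G H A = A \<union> {e \<in> edges G. \<exists>F \<in> copies G H. e \<in> F \<and> F - {e} \<subseteq> A}"

definition percolates :: "'a graph \<Rightarrow> 'b graph \<Rightarrow> 'a set set \<Rightarrow> bool" where
  "percolates G H A \<longleftrightarrow> (\<Union>i. (boot_step G H ^^ i) A) = edges G"

definition wsat :: "'a graph \<Rightarrow> 'b graph \<Rightarrow> nat" where
  "wsat G H = (LEAST k. \<exists>A. A \<subseteq> edges G \<and> percolates G H A \<and> card A = k)"

definition m_e :: "'a graph \<Rightarrow> int \<Rightarrow> nat" where
  "m_e G i = (if i \<le> 0 then 0 else wsat G (star (nat i)))"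

end

(* A set of edges S_(k+1)-percolates exactly when every edge is reached by the rule
   "an edge becomes active once one of its endpoints carries k other active edges",
   because k + 1 edges at a common vertex form a copy of S_(k+1).
   In G x K_n seed the layer G x {t} with a smallest set percolating in G for the
   threshold r - t (no seed when r - t <= 0), and induct on t. Once the layers below t
   are fully active, every vertex (v, t) already carries the t active fibre edges
   {(v, t), (v, i)}, i < t, so threshold r - t inside layer t suffices to fill it.
   Once layer i is full, a fibre edge at (v, i) sees deg v >= r active layer edges
   at (v, i) and joins as well. *)

theory Submission
  imports Defs
begin

lemma is_graph_edgeE:
  assumes "is_graph G" "e \<in> edges G"
  obtains x y where "e = {x, y}" "x \<noteq> y" "x \<in> verts G" "y \<in> verts G"
  using assms unfolding is_graph_def by blast

lemma is_graph_edge_atE: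
  assumes "is_graph G" "e \<in> edges G" "v \<in> e"
  obtains w where "e = {v, w}" "w \<noteq> v" "v \<in> verts G" "w \<in> verts G"
  using assms by (elim is_graph_edgeE) (auto simp: insert_commute)

lemma is_graph_doubleton_edgeD:
  assumes "is_graph G" "{x, y} \<in> edges G"
  shows "x \<noteq> y \<and> x \<in> verts G \<and> y \<in> verts G"
  using assms by (elim is_graph_edgeE) (auto simp: doubleton_eq_iff)

lemma finite_edges: "is_graph G \<Longrightarrow> finite (edges G)"
  by (rule finite_subset[of _ "Pow (verts G)"]) (auto simp: is_graph_def)

lemma verts_complete_graph [simp]: "verts (complete_graph n) = {0..<n}"
  by (simp add: complete_graph_def verts_def)

lemma edges_complete_graph: "{i, j} \<in> edges (complete_graph n) \<longleftrightarrow> i < n \<and> j < n \<and> i \<noteq> j"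
  by (auto simp: complete_graph_def edges_def doubleton_eq_iff)

lemma is_graph_complete_graph: "is_graph (complete_graph n)"
  by (auto simp: is_graph_def complete_graph_def verts_def edges_def)

lemma verts_cart_prod [simp]: "verts (cart_prod G H) = verts G \<times> verts H"
  by (simp add: cart_prod_def verts_def)

lemma edges_cart_prod:
  "edges (cart_prod G H) =
     {{(g, h1), (g, h2)} | g h1 h2. g \<in> verts G \<and> {h1, h2} \<in> edges H} \<union>
     {{(g1, h), (g2, h)} | g1 g2 h. h \<in> verts H \<and> {g1, g2} \<in> edges G}"
  by (simp add: cart_prod_def edges_def)

lemma is_graph_cart_prod:
  assumes "is_graph G" "is_graph H"
  shows "is_graph (cart_prod G H)"
proof -
  have "s \<in> {{x, y} | x y. x \<in> verts G \<times> verts H \<and> y \<in> verts G \<times> verts H \<and> x \<noteq> y}"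
    if "s \<in> edges (cart_prod G H)" for s
    using that assms unfolding edges_cart_prod by (blast dest: is_graph_doubleton_edgeD)
  then show ?thesis
    using assms by (auto simp: is_graph_def)
qed

definition edges_at :: "'a graph \<Rightarrow> 'a \<Rightarrow> 'a set set" where
  "edges_at G v = {e \<in> edges G. v \<in> e}"

lemma degree_eq_card_edges_at: "degree G v = card (edges_at G v)"
  by (simp add: degree_def edges_at_def)

lemma verts_star: "verts (star k) = {0..Suc k}"
  by (simp add: star_def verts_def)

lemma edges_star: "edges (star k) = (\<lambda>i. {0, i}) ` {1..Suc k}"
  by (auto simp: star_def edges_def)

lemma copies_star_imp_edges_at:
  assumes "F \<in> copies G (star k)"
  obtains v where "F \<subseteq> edges_at G v" "card F = Suc k"
proof -
  from assms obtain f where F: "F = (\<lambda>i. {f 0, f i}) ` {1..Suc k}"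
    and inj: "inj_on f {0..Suc k}" and into: "\<forall>i \<in> {1..Suc k}. {f 0, f i} \<in> edges G"
    by (auto simp: copies_def verts_star edges_star image_image)
  have "inj_on (\<lambda>i. {f 0, f i}) {1..Suc k}"
  proof (rule inj_onI)
    fix i j assume "i \<in> {1..Suc k}" "j \<in> {1..Suc k}" "{f 0, f i} = {f 0, f j}"
    then show "i = j"
      using inj by (auto simp: doubleton_eq_iff dest: inj_onD)
  qed
  then have "card F = Suc k"
    by (simp add: F card_image)
  moreover have "F \<subseteq> edges_at G (f 0)"
    using into by (auto simp: F edges_at_def)
  ultimately show thesis
    using that by blast
qed

lemma edges_at_imp_copies_star:
  assumes G: "is_graph G" and F: "F \<subseteq> edges_at G v" "card F = Suc k"
  shows "F \<in> copies G (star k)"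
proof -
  have "finite F"
    using F(2) by (simp add: card_ge_0_finite)
  then obtain g where g: "bij_betw g {1..Suc k} F"
    using ex_bij_betw_nat_finite_1 F(2) by fastforce
  \<comment> \<open>The centre goes to v and leaf i to the far endpoint of the i-th edge of F.\<close>
  define f where "f i = (if i = 0 then v else the_elem (g i - {v}))" for i
  have f0: "f 0 = v"
    by (simp add: f_def)
  have g_eq: "g i = {v, f i}" "f i \<noteq> v" "f i \<in> verts G" "v \<in> verts G"
    if "i \<in> {1..Suc k}" for i
  proof -
    have "g i \<in> edges_at G v"
      using g that F(1) by (auto simp: bij_betw_def)
    then obtain w where "g i = {v, w}" "w \<noteq> v" "v \<in> verts G" "w \<in> verts G"
      by (auto simp: edges_at_def elim: is_graph_edge_atE[OF G])
    moreover have "f i = w"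
      using that calculation(1,2) by (auto simp: f_def)
    ultimately show "g i = {v, f i}" "f i \<noteq> v" "f i \<in> verts G" "v \<in> verts G"
      by auto
  qed
  have image: "(\<lambda>h. f ` h) ` edges (star k) = F"
  proof -
    have "(\<lambda>h. f ` h) ` edges (star k) = (\<lambda>i. {v, f i}) ` {1..Suc k}"
      by (simp add: edges_star image_image f0)
    also have "\<dots> = g ` {1..Suc k}"
      using g_eq(1) by simp
    finally show ?thesis
      using g by (simp add: bij_betw_def)
  qed
  have inj: "inj_on f {0..Suc k}"
  proof (rule inj_onI)
    fix i j assume ij: "i \<in> {0..Suc k}" "j \<in> {0..Suc k}" "f i = f j"
    show "i = j"
    proof (cases "i = 0 \<or> j = 0")
      case True
      then show ?thesis
        using ij g_eq(2)[of i] g_eq(2)[of j] f0 by (cases i; cases j) auto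
    next
      case False
      then have "g i = g j"
        using ij g_eq(1) by auto
      then show ?thesis
        using False ij g by (auto simp: bij_betw_def dest: inj_onD)
    qed
  qed
  have "f i \<in> verts G" if "i \<in> {0..Suc k}" for i
    using that g_eq(3) g_eq(4)[of 1] f0 by (cases i) auto
  then have into_verts: "f ` verts (star k) \<subseteq> verts G"
    by (auto simp: verts_star)
  have "F \<subseteq> edges G"
    using F(1) by (auto simp: edges_at_def)
  then have into_edges: "\<forall>h \<in> edges (star k). f ` h \<in> edges G"
    using image by blast
  show ?thesis
    unfolding copies_def using image inj into_verts into_edges by (auto simp: verts_star)
qed

section \<open>Star percolation as a closure\<close>

inductive_set edge_closure :: "'a graph \<Rightarrow> nat \<Rightarrow> 'a set set \<Rightarrow> 'a set set"
  for G k A where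
  base: "e \<in> A \<Longrightarrow> e \<in> edge_closure G k A"
| step: "\<lbrakk>e \<in> edges G; v \<in> e; S \<subseteq> edges_at G v - {e}; \<forall>s\<in>S. s \<in> edge_closure G k A;
          finite S; k \<le> card S\<rbrakk> \<Longrightarrow> e \<in> edge_closure G k A"

lemma edge_closure_subset_edges: "A \<subseteq> edges G \<Longrightarrow> edge_closure G k A \<subseteq> edges G"
  by (auto elim: edge_closure.induct)

lemma edges_subset_edge_closure_0:
  assumes "is_graph G"
  shows "edges G \<subseteq> edge_closure G 0 A"
proof
  fix e assume "e \<in> edges G"
  moreover obtain x y where "e = {x, y}"
    using assms \<open>e \<in> edges G\<close> by (rule is_graph_edgeE)
  ultimately show "e \<in> edge_closure G 0 A"
    by (intro edge_closure.step[where v = x and S = "{}"]) auto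
qed

lemma boot_step_iter_mono:
  "i \<le> j \<Longrightarrow> (boot_step G H ^^ i) A \<subseteq> (boot_step G H ^^ j) A"
  by (rule lift_Suc_mono_le[of "\<lambda>i. (boot_step G H ^^ i) A"]) (auto simp: boot_step_def)

lemma boot_step_iter_subset_edges:
  "A \<subseteq> edges G \<Longrightarrow> (boot_step G H ^^ i) A \<subseteq> edges G"
  by (induction i) (auto simp: boot_step_def)

lemma finite_subset_boot_step_iter:
  "finite S \<Longrightarrow> S \<subseteq> (\<Union>i. (boot_step G H ^^ i) A) \<Longrightarrow> \<exists>i. S \<subseteq> (boot_step G H ^^ i) A"
proof (induction S rule: finite_induct)
  case (insert e S)
  then obtain i j where "S \<subseteq> (boot_step G H ^^ i) A" "e \<in> (boot_step G H ^^ j) A"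
    by blast
  then have "insert e S \<subseteq> (boot_step G H ^^ max i j) A"
    using boot_step_iter_mono[of i "max i j" G H A] boot_step_iter_mono[of j "max i j" G H A]
    by auto
  then show ?case
    by blast
qed simp

lemma boot_step_star_iter_subset_edge_closure:
  "(boot_step G (star k) ^^ i) A \<subseteq> edge_closure G k A"
proof (induction i)
  case (Suc i)
  show ?case
  proof
    fix e assume "e \<in> (boot_step G (star k) ^^ Suc i) A"
    then consider "e \<in> (boot_step G (star k) ^^ i) A"
      | F where "e \<in> edges G" "F \<in> copies G (star k)" "e \<in> F"
          "F - {e} \<subseteq> (boot_step G (star k) ^^ i) A"
      by (auto simp: boot_step_def)
    then show "e \<in> edge_closure G k A"
    proof cases
      case 1
      then show ?thesis
        using Suc.IH by blast
    next
      case (2 F)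
      obtain v where F: "F \<subseteq> edges_at G v" "card F = Suc k"
        using \<open>F \<in> copies G (star k)\<close> by (rule copies_star_imp_edges_at)
      have "finite F"
        using F(2) by (simp add: card_ge_0_finite)
      show ?thesis
      proof (rule edge_closure.step[where v = v and S = "F - {e}"])
        show "v \<in> e"
          using F(1) \<open>e \<in> F\<close> by (auto simp: edges_at_def)
        show "k \<le> card (F - {e})"
          using F(2) \<open>e \<in> F\<close> \<open>finite F\<close> by simp
      qed (use 2 F Suc.IH \<open>finite F\<close> in auto)
    qed
  qed
qed (auto intro: edge_closure.base)

lemma edge_closure_subset_boot_step_star_iter:
  assumes G: "is_graph G"
  shows "edge_closure G k A \<subseteq> (\<Union>i. (boot_step G (star k) ^^ i) A)"
proof
  fix e assume "e \<in> edge_closure G k A"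
  then show "e \<in> (\<Union>i. (boot_step G (star k) ^^ i) A)"
  proof (induction rule: edge_closure.induct)
    case (base e)
    then show ?case
      by (metis UN_I UNIV_I funpow_0)
  next
    case (step e v S)
    obtain i where i: "S \<subseteq> (boot_step G (star k) ^^ i) A"
      using finite_subset_boot_step_iter[OF step.hyps(4)] step.IH by blast
    obtain T where T: "T \<subseteq> S" "card T = k" "finite T"
      using step.hyps(5) by (rule obtain_subset_with_card_n)
    have "insert e T \<in> copies G (star k)"
    proof (rule edges_at_imp_copies_star[OF G])
      show "insert e T \<subseteq> edges_at G v"
        using step.hyps(1-3) T(1) by (auto simp: edges_at_def)
      show "card (insert e T) = Suc k"
        using step.hyps(3) T by (subst card_insert_disjoint) auto
    qed
    moreover have "insert e T - {e} \<subseteq> (boot_step G (star k) ^^ i) A"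
      using T(1) i by blast
    ultimately have "e \<in> boot_step G (star k) ((boot_step G (star k) ^^ i) A)"
      using step.hyps(1) unfolding boot_step_def by blast
    then show ?case
      by (metis UN_I UNIV_I comp_apply funpow.simps(2))
  qed
qed

lemma percolates_star_iff_edge_closure:
  assumes "is_graph G" "A \<subseteq> edges G"
  shows "percolates G (star k) A \<longleftrightarrow> edges G \<subseteq> edge_closure G k A"
  using boot_step_star_iter_subset_edge_closure edge_closure_subset_boot_step_star_iter[OF assms(1)]
    edge_closure_subset_edges[OF assms(2)]
  unfolding percolates_def by blast

lemma wsat_le: "A \<subseteq> edges G \<Longrightarrow> percolates G H A \<Longrightarrow> wsat G H \<le> card A"
  unfolding wsat_def by (rule Least_le) blast

lemma wsat_attained:
  obtains A where "A \<subseteq> edges G" "percolates G H A" "card A = wsat G H"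
proof -
  let ?P = "\<lambda>k. \<exists>A. A \<subseteq> edges G \<and> percolates G H A \<and> card A = k"
  have "(\<Union>i. (boot_step G H ^^ i) (edges G)) \<subseteq> edges G"
    by (intro UN_least boot_step_iter_subset_edges) simp
  moreover have "edges G \<subseteq> (\<Union>i. (boot_step G H ^^ i) (edges G))"
    using UN_upper[of 0 UNIV "\<lambda>i. (boot_step G H ^^ i) (edges G)"] by simp
  ultimately have "?P (card (edges G))"
    unfolding percolates_def by blast
  then have "?P (wsat G H)"
    unfolding wsat_def by (rule LeastI)
  then show thesis
    using that by blast
qed

lemma m_e_le_card:
  assumes "is_graph G" "A \<subseteq> edges G" "edges G \<subseteq> edge_closure G k A"
  shows "m_e G (int k) \<le> card A"
  using assms by (simp add: m_e_def wsat_le percolates_star_iff_edge_closure)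

lemma m_e_attained:
  assumes "is_graph G"
  obtains B where "B \<subseteq> edges G" "card B = m_e G i" "edges G \<subseteq> edge_closure G (nat i) B"
proof (cases "i \<le> 0")
  case True
  then show thesis
    using that[of "{}"] edges_subset_edge_closure_0[OF assms] by (simp add: m_e_def)
next
  case False
  obtain B where "B \<subseteq> edges G" "percolates G (star (nat i)) B" "card B = wsat G (star (nat i))"
    by (rule wsat_attained)
  then show thesis
    using that False assms by (simp add: m_e_def percolates_star_iff_edge_closure)
qed

section \<open>Layers of the product with a complete graph\<close>

definition layer :: "'b \<Rightarrow> 'a set \<Rightarrow> ('a \<times> 'b) set" where
  "layer t e = (\<lambda>x. (x, t)) ` e"

lemma layer_doubleton [simp]: "layer t {x, y} = {(x, t), (y, t)}"
  by (simp add: layer_def)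

lemma mem_layer: "(x, s) \<in> layer t e \<longleftrightarrow> s = t \<and> x \<in> e"
  by (auto simp: layer_def)

lemma inj_layer: "inj (layer t)"
  unfolding layer_def by (rule inj_on_image) (simp add: inj_on_def)

lemma fibre_edge_neq_layer: "i \<noteq> t \<Longrightarrow> {(v, t), (v, i)} \<noteq> layer t e"
  by (metis insertCI mem_layer)

lemma layer_in_edges_cart_prod:
  assumes "is_graph G" "e \<in> edges G" "t \<in> verts H"
  shows "layer t e \<in> edges (cart_prod G H)"
  using assms by (elim is_graph_edgeE) (auto simp: edges_cart_prod)

lemma layer_in_edges_at_cart_prod:
  "is_graph G \<Longrightarrow> e \<in> edges_at G v \<Longrightarrow> t \<in> verts H \<Longrightarrow>
    layer t e \<in> edges_at (cart_prod G H) (v, t)"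
  by (simp add: edges_at_def mem_layer layer_in_edges_cart_prod)

lemma fibre_edge_in_edges_cart_prod:
  "g \<in> verts G \<Longrightarrow> {i, j} \<in> edges H \<Longrightarrow> {(g, i), (g, j)} \<in> edges (cart_prod G H)"
  by (auto simp: edges_cart_prod)

lemma edges_cart_prodE:
  assumes "s \<in> edges (cart_prod G H)"
  obtains (fibre) g i j where "s = {(g, i), (g, j)}" "g \<in> verts G" "{i, j} \<in> edges H"
    | (layer) e t where "s = layer t e" "e \<in> edges G" "t \<in> verts H"
  using assms unfolding edges_cart_prod
proof (elim UnE CollectE exE conjE)
  fix g1 g2 h assume "s = {(g1, h), (g2, h)}" "h \<in> verts H" "{g1, g2} \<in> edges G"
  then show thesis
    using layer[of h "{g1, g2}"] by simp
qed (rule fibre)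

context
  fixes G :: "'a graph" and n r :: nat
  assumes graph: "is_graph G" and min_degree: "\<forall>v \<in> verts G. r \<le> degree G v"
begin

lemma fibre_edge_in_edge_closure:
  assumes layer_full: "layer i ` edges G \<subseteq> edge_closure (cart_prod G (complete_graph n)) r A"
    and "v \<in> verts G" "i < n" "j < n" "i \<noteq> j"
  shows "{(v, i), (v, j)} \<in> edge_closure (cart_prod G (complete_graph n)) r A"
proof (rule edge_closure.step[where v = "(v, i)" and S = "layer i ` edges_at G v"])
  show "{(v, i), (v, j)} \<in> edges (cart_prod G (complete_graph n))"
    using assms by (intro fibre_edge_in_edges_cart_prod) (auto simp: edges_complete_graph)
  show "layer i ` edges_at G v
      \<subseteq> edges_at (cart_prod G (complete_graph n)) (v, i) - {{(v, i), (v, j)}}"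
  proof
    fix s assume "s \<in> layer i ` edges_at G v"
    then obtain e where e: "s = layer i e" "e \<in> edges_at G v"
      by blast
    have "s \<in> edges_at (cart_prod G (complete_graph n)) (v, i)"
      using layer_in_edges_at_cart_prod[OF graph e(2), where H = "complete_graph n"] e(1) \<open>i < n\<close>
      by simp
    moreover have "{(v, i), (v, j)} \<noteq> s"
      using e(1) \<open>i \<noteq> j\<close> fibre_edge_neq_layer by metis
    ultimately show "s \<in> edges_at (cart_prod G (complete_graph n)) (v, i) - {{(v, i), (v, j)}}"
      by auto
  qed
  have "finite (edges_at G v)"
    using finite_edges[OF graph] by (simp add: edges_at_def)
  then show "finite (layer i ` edges_at G v)"
    by simp
  show "r \<le> card (layer i ` edges_at G v)"
    using min_degree \<open>v \<in> verts G\<close>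
    by (simp add: card_image[OF inj_on_subset[OF inj_layer]] degree_eq_card_edges_at)
  show "\<forall>s \<in> layer i ` edges_at G v. s \<in> edge_closure (cart_prod G (complete_graph n)) r A"
    using layer_full by (auto simp: edges_at_def)
qed simp

lemma layer_in_edge_closure:
  assumes "t < n"
    and fibres: "\<And>v i. v \<in> verts G \<Longrightarrow> i < t \<Longrightarrow>
      {(v, t), (v, i)} \<in> edge_closure (cart_prod G (complete_graph n)) r A"
    and seeds: "layer t ` B \<subseteq> edge_closure (cart_prod G (complete_graph n)) r A"
    and "e \<in> edge_closure G (r - t) B"
  shows "layer t e \<in> edge_closure (cart_prod G (complete_graph n)) r A"
  using \<open>e \<in> edge_closure G (r - t) B\<close>
proof (induction rule: edge_closure.induct)
  case (base e)
  then show ?case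
    using seeds by blast
next
  case (step e v S)
  let ?P = "cart_prod G (complete_graph n)"
  define X where "X = (\<lambda>i. {(v, t), (v, i)}) ` {..<t}"
  have v: "v \<in> verts G"
    by (rule is_graph_edge_atE[OF graph step.hyps(1,2)])
  have S_edges: "layer t ` S \<subseteq> edges_at ?P (v, t) - {layer t e}"
  proof
    fix s assume "s \<in> layer t ` S"
    then obtain s' where s': "s = layer t s'" "s' \<in> edges_at G v" "s' \<noteq> e"
      using step.hyps(3) by blast
    moreover have "layer t s' \<in> edges_at ?P (v, t)"
      using layer_in_edges_at_cart_prod[OF graph s'(2), where H = "complete_graph n"] \<open>t < n\<close>
      by simp
    moreover have "layer t s' \<noteq> layer t e"
      using s'(3) by (simp add: inj_eq[OF inj_layer])
    ultimately show "s \<in> edges_at ?P (v, t) - {layer t e}"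
      by simp
  qed
  have X_edges: "X \<subseteq> edges_at ?P (v, t) - {layer t e}"
  proof
    fix s assume "s \<in> X"
    then obtain i where i: "i < t" "s = {(v, t), (v, i)}"
      by (auto simp: X_def)
    have "s \<in> edges ?P"
      using i v \<open>t < n\<close> by (simp add: fibre_edge_in_edges_cart_prod edges_complete_graph)
    moreover have "s \<noteq> layer t e"
      using i by (simp add: fibre_edge_neq_layer)
    ultimately show "s \<in> edges_at ?P (v, t) - {layer t e}"
      using i by (simp add: edges_at_def)
  qed
  have "inj_on (\<lambda>i. {(v, t), (v, i)}) {..<t}"
    by (auto simp: inj_on_def doubleton_eq_iff)
  then have card_X: "card X = t"
    by (simp add: X_def card_image)
  have "{(v, t), (v, i)} \<notin> range (layer t)" if "i < t" for i
    using fibre_edge_neq_layer[of i t v] that by (metis less_irrefl rangeE)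
  then have "layer t ` S \<inter> X = {}"
    by (auto simp: X_def)
  then have "card (layer t ` S \<union> X) = card S + t"
    using step.hyps(4) card_X
    by (simp add: X_def card_Un_disjoint card_image[OF inj_on_subset[OF inj_layer]])
  show ?case
  proof (rule edge_closure.step[where v = "(v, t)" and S = "layer t ` S \<union> X"])
    show "layer t e \<in> edges ?P"
      using graph step.hyps(1) \<open>t < n\<close> by (simp add: layer_in_edges_cart_prod)
    show "(v, t) \<in> layer t e"
      using step.hyps(2) by (simp add: mem_layer)
    show "layer t ` S \<union> X \<subseteq> edges_at ?P (v, t) - {layer t e}"
      using S_edges X_edges by blast
    show "\<forall>s \<in> layer t ` S \<union> X. s \<in> edge_closure ?P r A"
      using step.IH fibres v by (auto simp: X_def)
    show "finite (layer t ` S \<union> X)"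
      using step.hyps(4) by (simp add: X_def)
    show "r \<le> card (layer t ` S \<union> X)"
      using step.hyps(5) \<open>card (layer t ` S \<union> X) = card S + t\<close> by simp
  qed
qed

lemma edges_cart_prod_complete_subset_edge_closure:
  assumes "\<And>t. t < n \<Longrightarrow> edges G \<subseteq> edge_closure G (r - t) (B t)"
  shows "edges (cart_prod G (complete_graph n))
    \<subseteq> edge_closure (cart_prod G (complete_graph n)) r (\<Union>t<n. layer t ` B t)"
    (is "_ \<subseteq> ?C")
proof -
  have layers: "layer t ` edges G \<subseteq> ?C" if "t < n" for t
    using that
  proof (induction t rule: less_induct)
    case (less t)
    have fibres: "{(v, t), (v, i)} \<in> ?C" if "v \<in> verts G" "i < t" for v i
      using fibre_edge_in_edge_closure[of i _ v t] less that by (simp add: insert_commute)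
    have seeds: "layer t ` B t \<subseteq> ?C"
      using less.prems by (blast intro: edge_closure.base)
    show ?case
      using layer_in_edge_closure[OF less.prems fibres seeds] assms[OF less.prems] by blast
  qed
  show ?thesis
  proof
    fix s assume "s \<in> edges (cart_prod G (complete_graph n))"
    then show "s \<in> ?C"
    proof (cases rule: edges_cart_prodE)
      case (fibre g i j)
      then show ?thesis
        using fibre_edge_in_edge_closure[OF layers] by (simp add: edges_complete_graph)
    next
      case (layer e t)
      then show ?thesis
        using layers by auto
    qed
  qed
qed

end

theorem lemma3p5:
  fixes G :: "'a graph" and n r :: nat
  assumes "is_graph G" and "n \<ge> 1" and "r \<ge> 1"
    and "\<forall>v \<in> verts G. degree G v \<ge> r"
  shows "m_e (cart_prod G (complete_graph n)) (int r)
           \<le> (\<Sum>t = 0..n - 1. m_e G (int r - int t))"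
proof -
  have "\<exists>B. B \<subseteq> edges G \<and> card B = m_e G (int r - int t) \<and> edges G \<subseteq> edge_closure G (r - t) B"
    for t
    using m_e_attained[OF assms(1), of "int r - int t"] by (metis nat_minus_as_int)
  then obtain B where B: "\<And>t. B t \<subseteq> edges G" "\<And>t. card (B t) = m_e G (int r - int t)"
    "\<And>t. edges G \<subseteq> edge_closure G (r - t) (B t)"
    by metis
  let ?A = "\<Union>t<n. layer t ` B t"
  have "?A \<subseteq> edges (cart_prod G (complete_graph n))"
    using B(1) by (auto intro!: layer_in_edges_cart_prod[OF assms(1)])
  then have "m_e (cart_prod G (complete_graph n)) (int r) \<le> card ?A"
    using assms(1,4) B(3)
    by (intro m_e_le_card is_graph_cart_prod is_graph_complete_graph
        edges_cart_prod_complete_subset_edge_closure)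
  also have "\<dots> \<le> (\<Sum>t<n. card (layer t ` B t))"
    by (rule card_UN_le) simp
  also have "\<dots> = (\<Sum>t<n. m_e G (int r - int t))"
    by (simp add: B(2) card_image[OF inj_on_subset[OF inj_layer]])
  also have "\<dots> = (\<Sum>t = 0..n - 1. m_e G (int r - int t))"
    using \<open>n \<ge> 1\<close> by (intro sum.cong) auto
  finally show ?thesis .
qed

end
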